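(* Let $X$ be a finite set with $|X|\ge5$, $k$ an integer with $5<k<|X|-5$, $\mathfrak{C}$ a nonempty symmetric family of choice functions for $\binom{X}{k}$, $\mathcal{F}$ the set of simple averaging functions for $\mathfrak{C}$, and assume $r(\mathcal{F})=2$. Let $a^*_1\ne a^*_2$ be elements of $X$. Then there is $f^*\in\mathcal{F}_{[2]}$ such that: $f^*(a^*_1,a^*_2)=a^*_2$; for $b_1\ne b_2$ with $\{b_1,b_2\}\subseteq\{a^*_1,a^*_2\}$, $f^*(b_1,b_2)=b_2$; and for $b_1\ne b_2$ with $\{b_1,b_2\}\not\subseteq\{a^*_1,a^*_2\}$, $f^*(b_1,b_2)=b_1$.
   Context: $\binom{X}{k}=\{Y\subseteq X:|Y|=k\}$; choice functions satisfy $c(Y)\in Y$. Symmetric: closed under $c\mapsto\pi*c$, $(\pi*c)(Y)=\pi^{-1}(c(\pi(Y)))$. $\mathcal{F}_{[r]}$: functions $f:X^r\to X$ with $f(a,\dots,a)=a$ such that for all $c_1,\dots,c_r\in\mathfrak{C}$, $Y\mapsto f(c_1(Y),\dots,c_r(Y))$ is in $\mathfrak{C}$. A monarchy is a projection. $r(\mathcal{F})=\min\{r:\text{some } f\in\mathcal{F}_{[r]}\text{ is not a monarchy}\}$. *)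

theory Defs
  imports Main
begin

definition ksubsets :: "'a set \<Rightarrow> nat \<Rightarrow> 'a set set" where
  "ksubsets X k = {Y. Y \<subseteq> X \<and> card Y = k}"

text \<open>Choice functions for the k-subsets of X, made extensional (undefined
  outside the domain) so that equality of choice functions is meaningful.\<close>
definition choice_fun :: "'a set \<Rightarrow> nat \<Rightarrow> ('a set \<Rightarrow> 'a) \<Rightarrow> bool" where
  "choice_fun X k c \<longleftrightarrow> (\<forall>Y \<in> ksubsets X k. c Y \<in> Y) \<and> (\<forall>Y. Y \<notin> ksubsets X k \<longrightarrow> c Y = undefined)"

definition perm_act :: "'a set \<Rightarrow> nat \<Rightarrow> ('a \<Rightarrow> 'a) \<Rightarrow> ('a set \<Rightarrow> 'a) \<Rightarrow> ('a set \<Rightarrow> 'a)" where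
  "perm_act X k \<pi> c = (\<lambda>Y. if Y \<in> ksubsets X k then inv_into X \<pi> (c (\<pi> ` Y)) else undefined)"

definition symmetric_family :: "'a set \<Rightarrow> nat \<Rightarrow> ('a set \<Rightarrow> 'a) set \<Rightarrow> bool" where
  "symmetric_family X k C \<longleftrightarrow> (\<forall>c \<in> C. choice_fun X k c) \<and>
     (\<forall>\<pi> c. bij_betw \<pi> X X \<and> c \<in> C \<longrightarrow> perm_act X k \<pi> c \<in> C)"

text \<open>r-tuples over X are lists of length r with entries in X; functions
  X^r -> X are extensional functions on such lists.\<close>
definition tuples :: "'a set \<Rightarrow> nat \<Rightarrow> 'a list set" where
  "tuples X r = {xs. length xs = r \<and> set xs \<subseteq> X}"

definition avg_funs :: "'a set \<Rightarrow> nat \<Rightarrow> ('a set \<Rightarrow> 'a) set \<Rightarrow> nat \<Rightarrow> ('a list \<Rightarrow> 'a) set" where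
  "avg_funs X k C r = {f.
     (\<forall>xs \<in> tuples X r. f xs \<in> X) \<and> (\<forall>xs. xs \<notin> tuples X r \<longrightarrow> f xs = undefined) \<and>
     (\<forall>a \<in> X. f (replicate r a) = a) \<and>
     (\<forall>cs. length cs = r \<and> set cs \<subseteq> C \<longrightarrow>
        (\<lambda>Y. if Y \<in> ksubsets X k then f (map (\<lambda>c. c Y) cs) else undefined) \<in> C)}"

definition monarchy :: "'a set \<Rightarrow> nat \<Rightarrow> ('a list \<Rightarrow> 'a) \<Rightarrow> bool" where
  "monarchy X r f \<longleftrightarrow> (\<exists>i < r. \<forall>xs \<in> tuples X r. f xs = xs ! i)"

text \<open>r(F): least arity admitting a non-monarchy (0 if none exists; 0 is
  never the least such arity when |X| >= 2, since F_[0] is then empty).\<close>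
definition r_F :: "'a set \<Rightarrow> nat \<Rightarrow> ('a set \<Rightarrow> 'a) set \<Rightarrow> nat" where
  "r_F X k C = (if \<exists>r. \<exists>f \<in> avg_funs X k C r. \<not> monarchy X r f
     then LEAST r. \<exists>f \<in> avg_funs X k C r. \<not> monarchy X r f else 0)"

end

theory Submission
  imports Defs "HOL-Combinatorics.Transposition"
begin

(* Every binary averaging function f is conservative, f(x,y) \<in> {x,y}: otherwise take a
   k-set containing x and y but not f(x,y), and, by symmetry, choice functions in C selecting
   x and y on it.  Say that (x,y) forces (p,q) if every f with f(x,y) = y also has
   f(p,q) = q.  Forcing is transitive, invariant under permutations of X (conjugating f by a
   permutation keeps it averaging), and if (x,y) forces (p,q) then (q,p) forces (y,x)
   (apply the definition to f(y,x)).  If (a1,a2) forced a pair not contained in {a1,a2},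
   relabelling would show that any two pairs of distinct elements force each other, through
   a third pair disjoint from both; then every binary averaging function is a projection,
   contradicting r(F) = 2.  So for each such pair (p,q) some averaging function picks its
   first argument at (p,q) but not at (a1,a2) or (a2,a1).  The sets of pairs at which an
   averaging function picks its first argument are closed under intersection and union
   (take g(f(x,y),y) and g(x,f(x,y))), and the union over all such pairs is the f* sought. *)

lemma bij_betw_map_distinct:
  assumes "distinct xs" "distinct ys" "length xs = length ys" "set xs \<subseteq> X" "set ys \<subseteq> X"
  shows "\<exists>\<pi>. bij_betw \<pi> X X \<and> map \<pi> xs = ys"
  using assms
proof (induction xs arbitrary: ys)
  case Nil
  then show ?case using bij_betw_id[unfolded id_def] by (intro exI[of _ id]) simp
next
  case (Cons x xs)
  then obtain y ys' where ys: "ys = y # ys'" by (cases ys) auto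
  with Cons obtain \<pi> where \<pi>: "bij_betw \<pi> X X" "map \<pi> xs = ys'" by auto
  have "\<pi> x \<in> X" "y \<in> X" using \<pi>(1) Cons.prems ys by (auto dest: bij_betwE)
  then have bij: "bij_betw (transpose (\<pi> x) y \<circ> \<pi>) X X"
    by (intro bij_betw_trans[OF \<pi>(1)]) (simp add: bij_betw_transpose_iff)
  have "\<pi> x \<notin> set ys'"
    using \<pi> Cons.prems bij_betw_imp_inj_on[OF \<pi>(1)] by (auto simp: inj_on_image_mem_iff)
  moreover have "y \<notin> set ys'" using Cons.prems ys by auto
  ultimately have "map (transpose (\<pi> x) y) ys' = ys'"
    by (intro map_idI) (metis transpose_apply_other)
  then have "map (transpose (\<pi> x) y \<circ> \<pi>) (x # xs) = ys" using \<pi>(2) ys by (simp flip: map_map)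
  with bij show ?case by blast
qed

lemma two_fresh_elements:
  assumes "finite X" "finite S" "card S + 2 \<le> card X"
  obtains z w where "z \<in> X - S" "w \<in> X - S" "z \<noteq> w"
proof -
  have "2 \<le> card (X - S)" using diff_card_le_card_Diff[OF assms(2), of X] assms(3) by linarith
  then obtain T where "T \<subseteq> X - S" "card T = 2" by (meson obtain_subset_with_card_n)
  with that show ?thesis by (auto simp: card_2_iff)
qed

lemma tuples_2_iff [simp]: "[x, y] \<in> tuples X 2 \<longleftrightarrow> x \<in> X \<and> y \<in> X"
  by (auto simp: tuples_def)

lemma tuples_2E:
  assumes "xs \<in> tuples X 2"
  obtains x y where "xs = [x, y]" "x \<in> X" "y \<in> X"
  using assms by (auto simp: tuples_def numeral_2_eq_2 length_Suc_conv)

lemma ksubsets_image: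
  assumes "bij_betw \<pi> X X" "Y \<in> ksubsets X k"
  shows "\<pi> ` Y \<in> ksubsets X k"
  using assms unfolding ksubsets_def
  by (metis (mono_tags, lifting) bij_betw_def card_image image_mono inj_on_subset mem_Collect_eq)

lemma non_monarchy_of_r_F:
  assumes "r_F X k C = r" "r \<noteq> 0"
  shows "\<exists>f \<in> avg_funs X k C r. \<not> monarchy X r f"
proof -
  have ex: "\<exists>r. \<exists>f \<in> avg_funs X k C r. \<not> monarchy X r f"
    using assms unfolding r_F_def by presburger
  show ?thesis using LeastI_ex[OF ex] assms ex unfolding r_F_def by simp
qed

locale symmetric_choice_family =
  fixes X :: "'a set" and k :: nat and C :: "('a set \<Rightarrow> 'a) set"
  assumes finite_X: "finite X" and two_le_k: "2 \<le> k" and k_less_card: "k < card X"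
    and C_nonempty: "C \<noteq> {}" and symmetric: "symmetric_family X k C"
begin

abbreviation F2 :: "('a list \<Rightarrow> 'a) set" where
  "F2 \<equiv> avg_funs X k C 2"

definition binary_fun :: "('a \<Rightarrow> 'a \<Rightarrow> 'a) \<Rightarrow> 'a list \<Rightarrow> 'a" where
  "binary_fun g = (\<lambda>xs. if xs \<in> tuples X 2 then g (xs ! 0) (xs ! 1) else undefined)"

definition combine :: "('a \<Rightarrow> 'a \<Rightarrow> 'a) \<Rightarrow> ('a set \<Rightarrow> 'a) \<Rightarrow> ('a set \<Rightarrow> 'a) \<Rightarrow> 'a set \<Rightarrow> 'a" where
  "combine g c1 c2 = (\<lambda>Y. if Y \<in> ksubsets X k then g (c1 Y) (c2 Y) else undefined)"

lemma binary_fun_apply [simp]: "x \<in> X \<Longrightarrow> y \<in> X \<Longrightarrow> binary_fun g [x, y] = g x y"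
  by (simp add: binary_fun_def)

lemma choice_in: "c \<in> C \<Longrightarrow> Y \<in> ksubsets X k \<Longrightarrow> c Y \<in> Y"
  using symmetric by (auto simp: symmetric_family_def choice_fun_def)

lemma choice_in_X: "c \<in> C \<Longrightarrow> Y \<in> ksubsets X k \<Longrightarrow> c Y \<in> X"
  using choice_in by (auto simp: ksubsets_def)

lemma choice_undefined: "c \<in> C \<Longrightarrow> Y \<notin> ksubsets X k \<Longrightarrow> c Y = undefined"
  using symmetric by (auto simp: symmetric_family_def choice_fun_def)

lemma perm_act_in: "c \<in> C \<Longrightarrow> bij_betw \<pi> X X \<Longrightarrow> perm_act X k \<pi> c \<in> C"
  using symmetric by (auto simp: symmetric_family_def)

lemma avg_funs2_in_X: "f \<in> F2 \<Longrightarrow> x \<in> X \<Longrightarrow> y \<in> X \<Longrightarrow> f [x, y] \<in> X"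
  by (auto simp: avg_funs_def)

lemma avg_funs2_idem: "f \<in> F2 \<Longrightarrow> x \<in> X \<Longrightarrow> f [x, x] = x"
  by (auto simp: avg_funs_def numeral_2_eq_2)

lemma avg_funs2_combine:
  assumes "f \<in> F2" "c1 \<in> C" "c2 \<in> C"
  shows "combine (\<lambda>x y. f [x, y]) c1 c2 \<in> C"
proof -
  have "\<forall>cs. length cs = 2 \<and> set cs \<subseteq> C \<longrightarrow>
      (\<lambda>Y. if Y \<in> ksubsets X k then f (map (\<lambda>c. c Y) cs) else undefined) \<in> C"
    using assms(1) unfolding avg_funs_def by blast
  from this[rule_format, of "[c1, c2]"] show ?thesis
    using assms(2,3) by (simp add: combine_def cong: if_cong)
qed

lemma binary_fun_avg_funs2: "f \<in> F2 \<Longrightarrow> binary_fun (\<lambda>x y. f [x, y]) = f"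
  by (rule ext) (auto simp: binary_fun_def avg_funs_def elim: tuples_2E)

lemma binary_fun_in_avg_funs2I:
  assumes in_X: "\<And>x y. x \<in> X \<Longrightarrow> y \<in> X \<Longrightarrow> g x y \<in> X"
    and idem: "\<And>x. x \<in> X \<Longrightarrow> g x x = x"
    and closed: "\<And>c1 c2. c1 \<in> C \<Longrightarrow> c2 \<in> C \<Longrightarrow> combine g c1 c2 \<in> C"
  shows "binary_fun g \<in> F2"
  unfolding avg_funs_def mem_Collect_eq
proof (intro conjI allI impI ballI)
  fix cs :: "('a set \<Rightarrow> 'a) list"
  assume cs: "length cs = 2 \<and> set cs \<subseteq> C"
  then obtain c1 c2 where c: "cs = [c1, c2]" "c1 \<in> C" "c2 \<in> C"
    by (auto simp: numeral_2_eq_2 length_Suc_conv)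
  have "(\<lambda>Y. if Y \<in> ksubsets X k then binary_fun g (map (\<lambda>c. c Y) cs) else undefined)
      = combine g c1 c2"
    using c by (auto simp: combine_def choice_in_X)
  then show "(\<lambda>Y. if Y \<in> ksubsets X k then binary_fun g (map (\<lambda>c. c Y) cs) else undefined) \<in> C"
    using closed c by simp
next
  fix a assume "a \<in> X"
  then show "binary_fun g (replicate 2 a) = a"
    by (simp add: numeral_2_eq_2 idem)
qed (auto simp: binary_fun_def in_X elim!: tuples_2E)

lemma combine_binary_fun:
  assumes "c1 \<in> C" "c2 \<in> C"
  shows "combine (\<lambda>x y. binary_fun g [x, y]) c1 c2 = combine g c1 c2"
  using assms by (auto simp: combine_def choice_in_X)

lemma binary_fun_in_avg_funs2D:
  assumes "binary_fun g \<in> F2"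
  shows "\<And>x y. x \<in> X \<Longrightarrow> y \<in> X \<Longrightarrow> g x y \<in> X"
    and "\<And>x. x \<in> X \<Longrightarrow> g x x = x"
    and "\<And>c1 c2. c1 \<in> C \<Longrightarrow> c2 \<in> C \<Longrightarrow> combine g c1 c2 \<in> C"
  using avg_funs2_in_X[OF assms] avg_funs2_idem[OF assms] avg_funs2_combine[OF assms]
  by (simp_all add: combine_binary_fun)

lemma fst_in_avg_funs2: "binary_fun (\<lambda>x y. x) \<in> F2"
proof (rule binary_fun_in_avg_funs2I)
  fix c1 c2 assume "c1 \<in> C" "c2 \<in> C"
  then have "combine (\<lambda>x y. x) c1 c2 = c1" by (auto simp: combine_def choice_undefined)
  with \<open>c1 \<in> C\<close> show "combine (\<lambda>x y. x) c1 c2 \<in> C" by simp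
qed simp_all

lemma snd_in_avg_funs2: "binary_fun (\<lambda>x y. y) \<in> F2"
proof (rule binary_fun_in_avg_funs2I)
  fix c1 c2 assume "c1 \<in> C" "c2 \<in> C"
  then have "combine (\<lambda>x y. y) c1 c2 = c2" by (auto simp: combine_def choice_undefined)
  with \<open>c2 \<in> C\<close> show "combine (\<lambda>x y. y) c1 c2 \<in> C" by simp
qed simp_all

lemma compose_in_avg_funs2:
  assumes f: "f \<in> F2" and g: "binary_fun g \<in> F2" and h: "binary_fun h \<in> F2"
  shows "binary_fun (\<lambda>x y. f [g x y, h x y]) \<in> F2"
proof (rule binary_fun_in_avg_funs2I)
  fix c1 c2 assume c: "c1 \<in> C" "c2 \<in> C"
  have "combine (\<lambda>x y. f [g x y, h x y]) c1 c2
      = combine (\<lambda>x y. f [x, y]) (combine g c1 c2) (combine h c1 c2)"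
    by (auto simp: combine_def)
  then show "combine (\<lambda>x y. f [g x y, h x y]) c1 c2 \<in> C"
    using avg_funs2_combine[OF f] binary_fun_in_avg_funs2D(3)[OF g c]
      binary_fun_in_avg_funs2D(3)[OF h c]
    by simp
qed (use f binary_fun_in_avg_funs2D[OF g] binary_fun_in_avg_funs2D[OF h]
       in \<open>auto simp: avg_funs2_in_X avg_funs2_idem\<close>)

lemma perm_act_inv_image:
  assumes \<pi>: "bij_betw \<pi> X X" and c: "c \<in> C" and Y: "Y \<in> ksubsets X k"
  shows "perm_act X k (inv_into X \<pi>) c (\<pi> ` Y) = \<pi> (c Y)"
proof -
  have "Y \<subseteq> X" using Y by (simp add: ksubsets_def)
  then have "inv_into X \<pi> ` \<pi> ` Y = Y"
    using bij_betw_imp_inj_on[OF \<pi>] by (simp add: image_inv_into_cancel)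
  then show ?thesis
    using ksubsets_image[OF \<pi> Y] inv_into_inv_into_eq[OF \<pi> choice_in_X[OF c Y]]
    by (simp add: perm_act_def)
qed

lemma conjugate_in_avg_funs2:
  assumes f: "f \<in> F2" and \<pi>: "bij_betw \<pi> X X"
  shows "binary_fun (\<lambda>x y. inv_into X \<pi> (f [\<pi> x, \<pi> y])) \<in> F2"
proof (rule binary_fun_in_avg_funs2I)
  fix c1 c2 assume c: "c1 \<in> C" "c2 \<in> C"
  define \<sigma> where "\<sigma> = inv_into X \<pi>"
  have \<sigma>: "bij_betw \<sigma> X X" using bij_betw_inv_into[OF \<pi>] by (simp add: \<sigma>_def)
  define h where "h = combine (\<lambda>x y. f [x, y]) (perm_act X k \<sigma> c1) (perm_act X k \<sigma> c2)"
  have "h \<in> C" unfolding h_def using avg_funs2_combine[OF f] perm_act_in[OF _ \<sigma>] c by simp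
  moreover have "combine (\<lambda>x y. \<sigma> (f [\<pi> x, \<pi> y])) c1 c2 = perm_act X k \<pi> h"
  proof
    fix Y
    show "combine (\<lambda>x y. \<sigma> (f [\<pi> x, \<pi> y])) c1 c2 Y = perm_act X k \<pi> h Y"
    proof (cases "Y \<in> ksubsets X k")
      case True
      then have "h (\<pi> ` Y) = f [\<pi> (c1 Y), \<pi> (c2 Y)]"
        using c ksubsets_image[OF \<pi> True]
        by (simp add: h_def combine_def \<sigma>_def perm_act_inv_image[OF \<pi>])
      with True show ?thesis by (simp add: combine_def perm_act_def \<sigma>_def)
    qed (simp add: combine_def perm_act_def)
  qed
  ultimately show "combine (\<lambda>x y. inv_into X \<pi> (f [\<pi> x, \<pi> y])) c1 c2 \<in> C"
    using perm_act_in[OF _ \<pi>] by (simp add: \<sigma>_def)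
qed (use f \<pi> in \<open>auto simp: avg_funs2_in_X avg_funs2_idem bij_betw_apply bij_betw_inv_into_left
                 intro!: bij_betw_apply[OF bij_betw_inv_into[OF \<pi>]]\<close>)

lemma choice_attains:
  assumes Y: "Y \<in> ksubsets X k" and u: "u \<in> Y"
  shows "\<exists>c\<in>C. c Y = u"
proof -
  obtain c where c: "c \<in> C" using C_nonempty by blast
  define \<pi> where "\<pi> = transpose (c Y) u"
  have "c Y \<in> X" "u \<in> X" using choice_in_X[OF c Y] u Y by (auto simp: ksubsets_def)
  then have \<pi>: "bij_betw \<pi> X X" by (simp add: \<pi>_def)
  have "\<pi> ` Y = Y" using choice_in[OF c Y] u by (simp add: \<pi>_def)
  moreover have "inv_into X \<pi> (c Y) = u"
    using bij_betw_imp_inj_on[OF \<pi>] \<open>u \<in> X\<close> by (intro inv_into_f_eq) (auto simp: \<pi>_def)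
  ultimately have "perm_act X k \<pi> c Y = u" using Y by (simp add: perm_act_def)
  with perm_act_in[OF c \<pi>] show ?thesis by blast
qed

lemma avg_funs2_conservative:
  assumes f: "f \<in> F2" and x: "x \<in> X" and y: "y \<in> X"
  shows "f [x, y] = x \<or> f [x, y] = y"
proof (rule ccontr)
  define z where "z = f [x, y]"
  assume "\<not> (f [x, y] = x \<or> f [x, y] = y)"
  then have "z \<notin> {x, y}" by (simp add: z_def)
  have "z \<in> X" using avg_funs2_in_X[OF f x y] by (simp add: z_def)
  have "card {x, y} \<le> k" using two_le_k by (simp add: card_insert_if)
  moreover have "k \<le> card (X - {z})" using k_less_card finite_X \<open>z \<in> X\<close> by simp
  ultimately obtain Y where "{x, y} \<subseteq> Y" "Y \<subseteq> X - {z}" "card Y = k"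
    using exists_subset_between[of "{x, y}" k "X - {z}"] finite_X x y \<open>z \<notin> {x, y}\<close> by auto
  then have Y: "Y \<in> ksubsets X k" and "x \<in> Y" "y \<in> Y" "z \<notin> Y"
    by (auto simp: ksubsets_def)
  then obtain c1 c2 where c: "c1 \<in> C" "c2 \<in> C" "c1 Y = x" "c2 Y = y"
    using choice_attains[OF Y] by metis
  have "combine (\<lambda>x y. f [x, y]) c1 c2 Y \<in> Y"
    using choice_in[OF avg_funs2_combine[OF f c(1,2)] Y] .
  with Y c have "z \<in> Y" by (simp add: combine_def z_def)
  with \<open>z \<notin> Y\<close> show False ..
qed

definition forces :: "'a \<Rightarrow> 'a \<Rightarrow> 'a \<Rightarrow> 'a \<Rightarrow> bool" where
  "forces x y p q \<longleftrightarrow> (\<forall>f\<in>F2. f [x, y] = y \<longrightarrow> f [p, q] = q)"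

lemma forces_trans: "forces x y p q \<Longrightarrow> forces p q u v \<Longrightarrow> forces x y u v"
  unfolding forces_def by blast

lemma forces_perm:
  assumes "forces x y p q" and \<pi>: "bij_betw \<pi> X X" and "{x, y, p, q} \<subseteq> X"
  shows "forces (\<pi> x) (\<pi> y) (\<pi> p) (\<pi> q)"
  unfolding forces_def
proof (intro ballI impI)
  fix f assume f: "f \<in> F2" and "f [\<pi> x, \<pi> y] = \<pi> y"
  define g where "g = binary_fun (\<lambda>x y. inv_into X \<pi> (f [\<pi> x, \<pi> y]))"
  have "g \<in> F2" using conjugate_in_avg_funs2[OF f \<pi>] by (simp add: g_def)
  moreover have "g [x, y] = y"
    using \<open>f [\<pi> x, \<pi> y] = \<pi> y\<close> assms bij_betw_inv_into_left[OF \<pi>] bij_betw_apply[OF \<pi>]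
    by (simp add: g_def)
  ultimately have "g [p, q] = q" using assms(1) by (simp add: forces_def)
  then have "inv_into X \<pi> (f [\<pi> p, \<pi> q]) = q" using assms bij_betw_apply[OF \<pi>] by (simp add: g_def)
  moreover have "f [\<pi> p, \<pi> q] \<in> X" using avg_funs2_in_X[OF f] bij_betw_apply[OF \<pi>] assms by simp
  ultimately show "f [\<pi> p, \<pi> q] = \<pi> q" using bij_betw_inv_into_right[OF \<pi>] by metis
qed

lemma forces_swap:
  assumes "forces x y p q" and "{x, y, p, q} \<subseteq> X" and "p \<noteq> q"
  shows "forces q p y x"
  unfolding forces_def
proof (intro ballI impI)
  fix f assume f: "f \<in> F2" and "f [q, p] = p"
  define g where "g = binary_fun (\<lambda>x y. f [y, x])"
  have "g \<in> F2"
    using compose_in_avg_funs2[OF f snd_in_avg_funs2 fst_in_avg_funs2] by (simp add: g_def)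
  moreover have "g [p, q] \<noteq> q" using \<open>f [q, p] = p\<close> assms by (simp add: g_def)
  ultimately have "g [x, y] = x"
    using assms avg_funs2_conservative[of g x y] by (auto simp: forces_def)
  then show "f [y, x] = x" using assms by (simp add: g_def)
qed

lemma forces_relabel:
  assumes "forces a b p q" and "distinct [a, b, c]" "distinct [x, y, z]"
    and "{a, b, c} \<subseteq> X" "{x, y, z} \<subseteq> X" "p \<in> {a, b, c}" "q \<in> {a, b, c}"
  shows "forces x y (if p = a then x else if p = b then y else z)
                    (if q = a then x else if q = b then y else z)"
proof -
  obtain \<pi> where "bij_betw \<pi> X X" "map \<pi> [a, b, c] = [x, y, z]"
    using bij_betw_map_distinct[of "[a, b, c]" "[x, y, z]" X] assms by auto
  with forces_perm[OF assms(1), of \<pi>] assms show ?thesis by auto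
qed

lemma forces_quadruple_of_forces_xyxz:
  assumes xyxz: "\<And>x y z. distinct [x, y, z] \<Longrightarrow> {x, y, z} \<subseteq> X \<Longrightarrow> forces x y x z"
    and "distinct [x, y, z, w]" "{x, y, z, w} \<subseteq> X"
  shows "forces x y z w"
proof -
  have "forces x y x w" using xyxz[of x y w] assms by auto
  moreover have "forces x w z w"
    using forces_swap[OF xyxz[of w z x]] assms by auto
  ultimately show ?thesis by (rule forces_trans)
qed

lemma forces_all_quadruples:
  assumes forces: "forces a1 a2 p q" and "a1 \<noteq> a2" "p \<noteq> q" "\<not> {p, q} \<subseteq> {a1, a2}"
    and "{a1, a2, p, q} \<subseteq> X" and xyzw: "distinct [x, y, z, w]" "{x, y, z, w} \<subseteq> X"
  shows "forces x y z w"
proof -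
  have relabel: "forces x y (if p = a1 then x else if p = a2 then y else z)
                             (if q = a1 then x else if q = a2 then y else z)"
    if "c \<in> X" "c \<notin> {a1, a2}" "{p, q} \<subseteq> {a1, a2, c}" "distinct [x, y, z]" "{x, y, z} \<subseteq> X"
    for c x y z
    using forces_relabel[OF forces, of c x y z] assms that by auto
  consider "p = a1" | "p = a2" | "p \<notin> {a1, a2}" "q = a1" | "p \<notin> {a1, a2}" "q = a2"
    | "p \<notin> {a1, a2}" "q \<notin> {a1, a2}" by blast
  then show ?thesis
  proof cases
    case 1
    with assms have "forces x y x z" if "distinct [x, y, z]" "{x, y, z} \<subseteq> X" for x y z
      using relabel[of q x y z] that by auto
    then show ?thesis using xyzw by (rule forces_quadruple_of_forces_xyxz)
  next
    case 2
    with assms have xyyz: "forces x y y z" if "distinct [x, y, z]" "{x, y, z} \<subseteq> X" for x y z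
      using relabel[of q x y z] that by auto
    have "forces x y y z" "forces y z z w" using xyyz[of x y z] xyyz[of y z w] xyzw by auto
    then show ?thesis by (rule forces_trans)
  next
    case 3
    with assms have xyzx: "forces x y z x" if "distinct [x, y, z]" "{x, y, z} \<subseteq> X" for x y z
      using relabel[of p x y z] that by auto
    have "forces x y w x" "forces w x z w" using xyzx[of x y w] xyzx[of w x z] xyzw by auto
    then show ?thesis by (rule forces_trans)
  next
    case 4
    with assms have xyzy: "forces x y z y" if "distinct [x, y, z]" "{x, y, z} \<subseteq> X" for x y z
      using relabel[of p x y z] that by auto
    have "forces x y x z" if "distinct [x, y, z]" "{x, y, z} \<subseteq> X" for x y z
      using forces_swap[OF xyzy[of z x y]] that by auto
    then show ?thesis using xyzw by (rule forces_quadruple_of_forces_xyxz)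
  next
    case 5
    obtain \<pi> where "bij_betw \<pi> X X" "map \<pi> [a1, a2, p, q] = [x, y, z, w]"
      using bij_betw_map_distinct[of "[a1, a2, p, q]" "[x, y, z, w]" X] 5 assms by auto
    with forces_perm[OF forces, of \<pi>] assms show ?thesis by auto
  qed
qed

lemma forces_all_pairs:
  assumes "6 \<le> card X"
    and quadruples: "\<And>x y z w. distinct [x, y, z, w] \<Longrightarrow> {x, y, z, w} \<subseteq> X \<Longrightarrow> forces x y z w"
    and "u \<noteq> v" "p \<noteq> q" "{u, v, p, q} \<subseteq> X"
  shows "forces u v p q"
proof -
  have "card (set [u, v, p, q]) \<le> 4"
    using card_length[of "[u, v, p, q]"] by simp
  then have "card {u, v, p, q} + 2 \<le> card X"
    using assms(1) by simp
  then obtain z w where zw: "z \<in> X - {u, v, p, q}" "w \<in> X - {u, v, p, q}" "z \<noteq> w"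
    using two_fresh_elements[OF finite_X, of "{u, v, p, q}"] by auto
  have "forces u v z w"
    using zw assms(3,5) by (intro quadruples) auto
  moreover have "forces z w p q"
    using zw assms(4,5) by (intro quadruples) auto
  ultimately show ?thesis by (rule forces_trans)
qed

lemma monarchy_of_forces_all_pairs:
  assumes pairs: "\<And>u v p q. u \<noteq> v \<Longrightarrow> p \<noteq> q \<Longrightarrow> {u, v, p, q} \<subseteq> X \<Longrightarrow> forces u v p q"
    and f: "f \<in> F2"
  shows "monarchy X 2 f"
proof (cases "\<exists>u\<in>X. \<exists>v\<in>X. u \<noteq> v \<and> f [u, v] = v")
  case True
  then obtain u v where "u \<in> X" "v \<in> X" "u \<noteq> v" "f [u, v] = v" by blast
  then have "f [p, q] = q" if "p \<in> X" "q \<in> X" for p q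
    using pairs[of u v p q] f avg_funs2_idem[OF f] that by (cases "p = q") (auto simp: forces_def)
  then show ?thesis unfolding monarchy_def by (auto elim!: tuples_2E intro!: exI[of _ 1])
next
  case False
  then have "f [p, q] = p" if "p \<in> X" "q \<in> X" for p q
    using False avg_funs2_conservative[OF f that] that by auto
  then show ?thesis unfolding monarchy_def by (auto elim!: tuples_2E intro!: exI[of _ 0])
qed

lemma not_forces_of_non_monarchy:
  assumes "6 \<le> card X" and "f \<in> F2" "\<not> monarchy X 2 f"
    and "a1 \<noteq> a2" "p \<noteq> q" "\<not> {p, q} \<subseteq> {a1, a2}" "{a1, a2, p, q} \<subseteq> X"
  shows "\<not> forces a1 a2 p q"
proof
  assume "forces a1 a2 p q"
  then have "forces x y z w" if "distinct [x, y, z, w]" "{x, y, z, w} \<subseteq> X" for x y z w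
    using forces_all_quadruples assms that by blast
  then have "forces u v p' q'" if "u \<noteq> v" "p' \<noteq> q'" "{u, v, p', q'} \<subseteq> X" for u v p' q'
    using forces_all_pairs[OF assms(1)] that by blast
  with assms(2,3) show False using monarchy_of_forces_all_pairs by blast
qed

definition first_choices :: "('a list \<Rightarrow> 'a) \<Rightarrow> ('a \<times> 'a) set" where
  "first_choices f = {(x, y). x \<in> X \<and> y \<in> X \<and> f [x, y] = x}"

lemma first_choices_Int:
  assumes g: "g \<in> F2" and h: "h \<in> F2"
  shows "\<exists>m\<in>F2. first_choices m = first_choices g \<inter> first_choices h"
proof
  let ?m = "binary_fun (\<lambda>x y. h [g [x, y], y])"
  show "?m \<in> F2"
    using compose_in_avg_funs2[OF h _ snd_in_avg_funs2] binary_fun_avg_funs2[OF g] g by simp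
  have "h [g [x, y], y] = x \<longleftrightarrow> g [x, y] = x \<and> h [x, y] = x" if "x \<in> X" "y \<in> X" for x y
    using avg_funs2_conservative[OF g that] avg_funs2_idem[OF h \<open>y \<in> X\<close>] by auto
  then show "first_choices ?m = first_choices g \<inter> first_choices h"
    by (auto simp: first_choices_def)
qed

lemma first_choices_Un:
  assumes g: "g \<in> F2" and h: "h \<in> F2"
  shows "\<exists>m\<in>F2. first_choices m = first_choices g \<union> first_choices h"
proof
  let ?m = "binary_fun (\<lambda>x y. h [x, g [x, y]])"
  show "?m \<in> F2"
    using compose_in_avg_funs2[OF h fst_in_avg_funs2] binary_fun_avg_funs2[OF g] g by simp
  have "h [x, g [x, y]] = x \<longleftrightarrow> g [x, y] = x \<or> h [x, y] = x" if "x \<in> X" "y \<in> X" for x y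
    using avg_funs2_conservative[OF g that] avg_funs2_idem[OF h \<open>x \<in> X\<close>] by auto
  then show "first_choices ?m = first_choices g \<union> first_choices h"
    by (auto simp: first_choices_def avg_funs2_idem[OF h])
qed

lemma first_choices_cover:
  assumes "finite E" and B: "B \<inter> Id = {}"
    and "\<And>e. e \<in> E \<Longrightarrow> \<exists>g\<in>F2. e \<in> first_choices g \<and> first_choices g \<inter> B = {}"
  shows "\<exists>g\<in>F2. E \<subseteq> first_choices g \<and> first_choices g \<inter> B = {}"
  using assms(1,3)
proof (induction E rule: finite_induct)
  case empty
  have "first_choices (binary_fun (\<lambda>x y. y)) \<inter> B = {}"
    using B by (auto simp: first_choices_def)
  with snd_in_avg_funs2 show ?case by blast
next
  case (insert e E)
  obtain g where g: "g \<in> F2" "E \<subseteq> first_choices g" "first_choices g \<inter> B = {}"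
    using insert.prems by (metis insert.IH insertCI)
  obtain g' where g': "g' \<in> F2" "e \<in> first_choices g'" "first_choices g' \<inter> B = {}"
    using insert.prems by blast
  obtain m where m: "m \<in> F2" "first_choices m = first_choices g \<union> first_choices g'"
    using first_choices_Un[OF g(1) g'(1)] by blast
  then have "insert e E \<subseteq> first_choices m" "first_choices m \<inter> B = {}"
    using g g' by auto
  with m(1) show ?case by blast
qed

lemma separating_avg_fun:
  assumes "6 \<le> card X" and "f \<in> F2" "\<not> monarchy X 2 f"
    and "a1 \<noteq> a2" "p \<noteq> q" "\<not> {p, q} \<subseteq> {a1, a2}" "{a1, a2, p, q} \<subseteq> X"
  shows "\<exists>g\<in>F2. (p, q) \<in> first_choices g \<and> first_choices g \<inter> {(a1, a2), (a2, a1)} = {}"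
proof -
  have "\<not> forces a1 a2 p q"
    using not_forces_of_non_monarchy[OF assms(1-3)] assms(4-7) by blast
  moreover have "\<not> forces a2 a1 p q"
    using not_forces_of_non_monarchy[OF assms(1-3), of a2 a1 p q] assms(4-7) by (simp add: insert_commute)
  ultimately obtain g1 g2 where g: "g1 \<in> F2" "g1 [a1, a2] = a2" "g1 [p, q] \<noteq> q"
    "g2 \<in> F2" "g2 [a2, a1] = a1" "g2 [p, q] \<noteq> q"
    unfolding forces_def by blast
  have "g1 [p, q] = p" "g2 [p, q] = p"
    using g avg_funs2_conservative[of _ p q] assms(7) by auto
  with g assms(4,7) have "(p, q) \<in> first_choices g1 \<inter> first_choices g2"
    "first_choices g1 \<inter> first_choices g2 \<inter> {(a1, a2), (a2, a1)} = {}"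
    by (auto simp: first_choices_def)
  with first_choices_Int[OF g(1,4)] show ?thesis by metis
qed

end

theorem claim13p4:
  fixes X :: "'a set" and k :: nat and C :: "('a set \<Rightarrow> 'a) set" and a1 a2 :: 'a
  assumes "finite X" and "card X \<ge> 5"
    and "5 < k" and "k + 5 < card X"
    and "C \<noteq> {}" and "symmetric_family X k C"
    and "r_F X k C = 2"
    and "a1 \<in> X" and "a2 \<in> X" and "a1 \<noteq> a2"
  shows "\<exists>f \<in> avg_funs X k C 2.
           f [a1, a2] = a2 \<and>
           (\<forall>b1 \<in> X. \<forall>b2 \<in> X. b1 \<noteq> b2 \<and> {b1, b2} \<subseteq> {a1, a2} \<longrightarrow> f [b1, b2] = b2) \<and>
           (\<forall>b1 \<in> X. \<forall>b2 \<in> X. b1 \<noteq> b2 \<and> \<not> {b1, b2} \<subseteq> {a1, a2} \<longrightarrow> f [b1, b2] = b1)"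
proof -
  interpret symmetric_choice_family X k C
    using assms by unfold_locales auto
  obtain f where f: "f \<in> F2" "\<not> monarchy X 2 f"
    using non_monarchy_of_r_F[OF assms(7)] by auto
  define E where "E = {(b1, b2). b1 \<in> X \<and> b2 \<in> X \<and> b1 \<noteq> b2 \<and> \<not> {b1, b2} \<subseteq> {a1, a2}}"
  have "finite E" using finite_subset[of E "X \<times> X"] assms(1) by (auto simp: E_def)
  moreover have "\<exists>g\<in>F2. e \<in> first_choices g \<and> first_choices g \<inter> {(a1, a2), (a2, a1)} = {}"
    if "e \<in> E" for e
    using that separating_avg_fun[OF _ f] assms(3,4,8-10) by (auto simp: E_def)
  ultimately obtain g where g: "g \<in> F2" "E \<subseteq> first_choices g"
    "first_choices g \<inter> {(a1, a2), (a2, a1)} = {}"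
    using first_choices_cover[of E "{(a1, a2), (a2, a1)}"] assms(10) by blast
  have "g [b1, b2] = b2" if "b1 \<in> X" "b2 \<in> X" "b1 \<noteq> b2" "{b1, b2} \<subseteq> {a1, a2}" for b1 b2
    using that g(3) avg_funs2_conservative[OF g(1) that(1,2)] by (auto simp: first_choices_def)
  moreover have "g [b1, b2] = b1" if "b1 \<in> X" "b2 \<in> X" "b1 \<noteq> b2" "\<not> {b1, b2} \<subseteq> {a1, a2}" for b1 b2
    using that g(2) by (auto simp: E_def first_choices_def)
  ultimately show ?thesis using g(1) assms(8-10) by blast
qed

end
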